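(* Let $(\log\rho_i)_{i\in\mathbb Z}$ be i.i.d. real random variables with $\mathbb P[\log\rho_0>0]>0$ and $\mathbb P[\log\rho_0<0]>0$, let $V$ be the associated random walk defined below, and assume moreover $\liminf_{x\to+\infty}V(x)=-\infty$ almost surely. Let $h>0$. Then: (i) the processes $\big(V[m_1(h)-k]-V[m_1(h)],\ 0\le k\le m_1(h)\big)$ and $\big(V[m_1(h)+k]-V[m_1(h)],\ 0\le k\le T^\uparrow(h)-m_1(h)\big)$ are independent; (ii) the process $\big(V[m_1(h)+k]-V[m_1(h)],\ 0\le k\le T^\uparrow(h)-m_1(h)\big)$ is equal in law to $\big(V(k),\ 0\le k\le T_V([h,+\infty[)\big)$ conditioned on $\{T_V([h,+\infty[)<T_V(]-\infty,0[)\}$.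
   Context: $V(x)=\sum_{k=1}^x\log\rho_k$ for $x>0$, $V(0)=0$, $V(x)=-\sum_{k=x+1}^0\log\rho_k$ for $x<0$. $V^\uparrow(x)=\max_{0\le i\le j\le x}[V(j)-V(i)]$ for $x\in\mathbb N$; $T^\uparrow(h)=\min\{x\ge0:V^\uparrow(x)\ge h\}$; $m_1(h)=\min\{x\ge0:V(x)=\min_{[0,T^\uparrow(h)]}V\}$. For $A\subset\mathbb R$, $T_V(A)=\min\{x\ge1:V(x)\in A\}$. *)

theory Defs
  imports "HOL-Probability.Probability"
begin

text \<open>The potential V associated with a realisation l of (log rho_i)_{i in Z}.\<close>
definition Vpot :: "(int \<Rightarrow> real) \<Rightarrow> int \<Rightarrow> real" where
  "Vpot l x = (if x \<ge> 0 then (\<Sum>k\<in>{1..x}. l k) else - (\<Sum>k\<in>{x+1..0}. l k))"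

definition Vup :: "(int \<Rightarrow> real) \<Rightarrow> nat \<Rightarrow> real" where
  "Vup l x = Max {Vpot l (int j) - Vpot l (int i) | i j. i \<le> j \<and> j \<le> x}"

definition Tup :: "(int \<Rightarrow> real) \<Rightarrow> real \<Rightarrow> enat" where
  "Tup l h = (if \<exists>x. Vup l x \<ge> h then enat (LEAST x. Vup l x \<ge> h) else \<infinity>)"

text \<open>m_1(h) = min{x >= 0 : V(x) = min_{[0,T-up(h)]} V}
  (only meaningful when T-up(h) is finite; arbitrary value 0 otherwise).\<close>
definition m1 :: "(int \<Rightarrow> real) \<Rightarrow> real \<Rightarrow> nat" where
  "m1 l h = (case Tup l h of
      enat t \<Rightarrow> (LEAST x. Vpot l (int x) = Min ((\<lambda>y. Vpot l (int y)) ` {0..t}))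
    | \<infinity> \<Rightarrow> 0)"

definition TV :: "(int \<Rightarrow> real) \<Rightarrow> real set \<Rightarrow> enat" where
  "TV l A = (if \<exists>x::nat. x \<ge> 1 \<and> Vpot l (int x) \<in> A
             then enat (LEAST x::nat. x \<ge> 1 \<and> Vpot l (int x) \<in> A) else \<infinity>)"

definition stopidx :: "enat \<Rightarrow> nat \<Rightarrow> nat" where
  "stopidx T k = (case T of enat n \<Rightarrow> min k n | \<infinity> \<Rightarrow> k)"

text \<open>A path of (possibly infinite) length n, encoded as the pair (n, stopped path).
  The path (Z_k, 0 <= k <= n) is encoded as (n, k |-> Z_{min(k,n)}).\<close>
definition path_space :: "(enat \<times> (nat \<Rightarrow> real)) measure" where
  "path_space = count_space UNIV \<Otimes>\<^sub>M (\<Pi>\<^sub>M k\<in>UNIV. borel)"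

definition pre_min_path :: "(int \<Rightarrow> real) \<Rightarrow> real \<Rightarrow> enat \<times> (nat \<Rightarrow> real)" where
  "pre_min_path l h = (let m = m1 l h in
     (enat m, \<lambda>k. Vpot l (int m - int (stopidx (enat m) k)) - Vpot l (int m)))"

definition post_min_path :: "(int \<Rightarrow> real) \<Rightarrow> real \<Rightarrow> enat \<times> (nat \<Rightarrow> real)" where
  "post_min_path l h = (let m = m1 l h; n = Tup l h - enat m in
     (n, \<lambda>k. Vpot l (int m + int (stopidx n k)) - Vpot l (int m)))"

definition hit_path :: "(int \<Rightarrow> real) \<Rightarrow> real \<Rightarrow> enat \<times> (nat \<Rightarrow> real)" where
  "hit_path l h = (let n = TV l {h..} in (n, \<lambda>k. Vpot l (int (stopidx n k))))"

end

(* Let a = m1(h) and n = T-up(h) - a. Deterministically, T-up(h) = a + n and m1(h) = a hold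
   exactly when a is a strict running minimum of V that is not preceded by a rise of height h,
   and the walk restarted at a leaves the strip [0, h) through its top at time n. The first
   condition and the pre-minimum path depend only on the increments up to a, the second condition
   and the post-minimum path only on those after a. Independence and stationarity of the
   increments therefore give
     P[pre in B, post in A] = sum_a P[first condition at a, reversed path in B] * c(A),
   where c(A) is the probability that V exits [0, h) upwards with stopped path in A; all of the
   mass is accounted for because T-up(h) < oo almost surely (a block of K consecutive steps
   above h/K occurs almost surely). A series of this product form forces independence, and
   taking B = everything yields the law c(A) / c(everything) of the hitting path of [h, oo)
   conditioned on hitting it before (-oo, 0). *)

theory Submission
  imports Defs
begin

section \<open>Decomposition of the path at the minimum\<close>

definition shift_incr :: "nat \<Rightarrow> (int \<Rightarrow> real) \<Rightarrow> int \<Rightarrow> real" where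
  "shift_incr a l = (\<lambda>i. l (i + int a))"

definition rises_by :: "real \<Rightarrow> (int \<Rightarrow> real) \<Rightarrow> nat \<Rightarrow> bool" where
  "rises_by h l x \<longleftrightarrow> (\<exists>j\<le>x. \<exists>i\<le>j. h \<le> Vpot l (int j) - Vpot l (int i))"

definition low_point_before_rise :: "real \<Rightarrow> nat \<Rightarrow> (int \<Rightarrow> real) \<Rightarrow> bool" where
  "low_point_before_rise h a l \<longleftrightarrow>
     (\<forall>k<a. Vpot l (int a) < Vpot l (int k)) \<and> \<not> rises_by h l a"

definition first_exit_above :: "real \<Rightarrow> nat \<Rightarrow> (int \<Rightarrow> real) \<Rightarrow> bool" where
  "first_exit_above h n l \<longleftrightarrow> 1 \<le> n \<and> h \<le> Vpot l (int n) \<and>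
     (\<forall>k\<in>{1..<n}. 0 \<le> Vpot l (int k) \<and> Vpot l (int k) < h)"

definition reversed_path :: "nat \<Rightarrow> (int \<Rightarrow> real) \<Rightarrow> enat \<times> (nat \<Rightarrow> real)" where
  "reversed_path a l = (enat a, \<lambda>k. Vpot l (int (a - min k a)) - Vpot l (int a))"

definition stopped_path :: "nat \<Rightarrow> (int \<Rightarrow> real) \<Rightarrow> enat \<times> (nat \<Rightarrow> real)" where
  "stopped_path n l = (enat n, \<lambda>k. Vpot l (int (min k n)))"

lemma Vpot_0 [simp]: "Vpot l 0 = 0"
  by (simp add: Vpot_def)

lemma Vpot_Suc: "Vpot l (int (Suc k)) = Vpot l (int k) + l (int k + 1)"
proof -
  have "{1..int k + 1} = insert (int k + 1) {1..int k}" by auto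
  then show ?thesis by (simp add: Vpot_def add.commute)
qed

lemma Vpot_shift_incr: "Vpot (shift_incr a l) (int k) = Vpot l (int (a + k)) - Vpot l (int a)"
proof (induction k)
  case (Suc k)
  have "a + Suc k = Suc (a + k)" by simp
  then show ?case by (simp only: Vpot_Suc Suc.IH) (simp add: shift_incr_def ac_simps)
qed simp

lemma Vpot_cong: "(\<And>i. i \<in> {1..int x} \<Longrightarrow> l i = l' i) \<Longrightarrow> Vpot l (int x) = Vpot l' (int x)"
  by (simp add: Vpot_def)

lemma Vup_ge_iff: "h \<le> Vup l x \<longleftrightarrow> rises_by h l x"
proof -
  let ?S = "{Vpot l (int j) - Vpot l (int i) | i j. i \<le> j \<and> j \<le> x}"
  have "?S \<subseteq> (\<lambda>(i, j). Vpot l (int j) - Vpot l (int i)) ` ({..x} \<times> {..x})" by auto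
  then have "finite ?S" by (rule finite_subset) auto
  moreover have "?S \<noteq> {}" by auto
  ultimately show ?thesis unfolding Vup_def rises_by_def by (subst Max_ge_iff) auto
qed

lemma Tup_eq_Least:
  "Tup l h = (if \<exists>x. rises_by h l x then enat (LEAST x. rises_by h l x) else \<infinity>)"
  by (simp add: Tup_def Vup_ge_iff)

lemma Least_eq_iff_nat: "\<exists>x. P x \<Longrightarrow> (LEAST x::nat. P x) = n \<longleftrightarrow> P n \<and> (\<forall>k<n. \<not> P k)"
  by (metis LeastI_ex Least_equality not_less not_less_Least)

lemma less_Least_iff_nat: "\<exists>x. P x \<Longrightarrow> n < (LEAST x::nat. P x) \<longleftrightarrow> (\<forall>k\<le>n. \<not> P k)"
  by (metis LeastI_ex le_less_trans not_less not_less_Least)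

lemma Tup_eq_enat_iff: "Tup l h = enat t \<longleftrightarrow> rises_by h l t \<and> (\<forall>x<t. \<not> rises_by h l x)"
  unfolding Tup_eq_Least by (auto simp: Least_eq_iff_nat)

lemma m1_eq_iff:
  assumes "Tup l h = enat t"
  shows "m1 l h = a \<longleftrightarrow> a \<le> t \<and> (\<forall>y\<le>t. Vpot l (int a) \<le> Vpot l (int y)) \<and>
    (\<forall>k<a. Vpot l (int a) < Vpot l (int k))"
proof -
  define V where "V j = Vpot l (int j)" for j
  define mn where "mn = Min (V ` {0..t})"
  have mn_le: "mn \<le> V y" if "y \<le> t" for y
    unfolding mn_def using that by (intro Min_le) auto
  have "mn \<in> V ` {0..t}" unfolding mn_def by (intro Min_in) auto
  then obtain x0 where x0: "x0 \<le> t" "V x0 = mn" by auto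
  have m1_Least: "m1 l h = (LEAST x. V x = mn)"
    unfolding m1_def assms mn_def V_def by simp
  have "\<exists>x. V x = mn" using x0 by blast
  then have "m1 l h = a \<longleftrightarrow> V a = mn \<and> (\<forall>k<a. V k \<noteq> mn)"
    unfolding m1_Least by (rule Least_eq_iff_nat)
  also have "\<dots> \<longleftrightarrow> a \<le> t \<and> (\<forall>y\<le>t. V a \<le> V y) \<and> (\<forall>k<a. V a < V k)"
  proof
    assume first: "V a = mn \<and> (\<forall>k<a. V k \<noteq> mn)"
    have "a \<le> t"
    proof (rule ccontr)
      assume "\<not> a \<le> t"
      then have "x0 < a" using x0(1) by simp
      then show False using first x0(2) by blast
    qed
    moreover have "V a < V k" if "k < a" for k
    proof -
      have "mn \<le> V k" using mn_le that \<open>a \<le> t\<close> by simp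
      moreover have "mn \<noteq> V k" using first that by auto
      ultimately show ?thesis using first by (simp add: order.strict_iff_order)
    qed
    ultimately show "a \<le> t \<and> (\<forall>y\<le>t. V a \<le> V y) \<and> (\<forall>k<a. V a < V k)"
      using first mn_le by simp
  next
    assume least: "a \<le> t \<and> (\<forall>y\<le>t. V a \<le> V y) \<and> (\<forall>k<a. V a < V k)"
    then have "V a = mn" using x0 mn_le by (metis antisym)
    moreover have "V k \<noteq> mn" if "k < a" for k
      using least that \<open>V a = mn\<close> by auto
    ultimately show "V a = mn \<and> (\<forall>k<a. V k \<noteq> mn)" by blast
  qed
  finally show ?thesis unfolding V_def .
qed

lemma Tup_finite_decomposition:
  assumes h: "h > 0" and T: "Tup l h = enat t"
  shows "m1 l h < t \<and> low_point_before_rise h (m1 l h) l \<and>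
    first_exit_above h (t - m1 l h) (shift_incr (m1 l h) l)"
proof -
  define V where "V j = Vpot l (int j)" for j
  define m where "m = m1 l h"
  have rise_t: "rises_by h l t" and no_rise: "\<And>x. x < t \<Longrightarrow> \<not> rises_by h l x"
    using T unfolding Tup_eq_enat_iff by auto
  have "m \<le> t" and min_m: "\<And>y. y \<le> t \<Longrightarrow> V m \<le> V y" and strict: "\<And>k. k < m \<Longrightarrow> V m < V k"
    using m1_eq_iff[OF T, of m] unfolding m_def V_def by auto
  obtain i j where ij: "j \<le> t" "i \<le> j" "h \<le> V j - V i"
    using rise_t unfolding rises_by_def V_def by auto
  have "j = t"
    using ij no_rise[of j] unfolding rises_by_def V_def by (meson le_neq_implies_less order_refl)
  with ij min_m[of i] have rise: "h \<le> V t - V m" by auto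
  with h \<open>m \<le> t\<close> have "m < t" by (cases "m = t") auto
  have "low_point_before_rise h m l"
    unfolding low_point_before_rise_def using strict no_rise[OF \<open>m < t\<close>] by (simp add: V_def)
  moreover have "first_exit_above h (t - m) (shift_incr m l)"
    unfolding first_exit_above_def Vpot_shift_incr
  proof (intro conjI ballI)
    show "1 \<le> t - m" using \<open>m < t\<close> by simp
    show "h \<le> Vpot l (int (m + (t - m))) - Vpot l (int m)"
      using rise \<open>m < t\<close> by (simp add: V_def)
  next
    fix k assume k: "k \<in> {1..<t - m}"
    show "0 \<le> Vpot l (int (m + k)) - Vpot l (int m)"
      using min_m[of "m + k"] k by (auto simp: V_def)
    have "\<not> rises_by h l (m + k)" using no_rise k by auto
    then show "Vpot l (int (m + k)) - Vpot l (int m) < h"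
      unfolding rises_by_def by (meson le_add1 not_less order_refl)
  qed
  ultimately show ?thesis using \<open>m < t\<close> unfolding m_def by simp
qed

lemma low_point_exit_min:
  assumes h: "h > 0" and low: "low_point_before_rise h a l"
    and exit: "first_exit_above h n (shift_incr a l)" and y: "y \<le> a + n"
  shows "Vpot l (int a) \<le> Vpot l (int y)"
proof (cases "y < a")
  case True
  then show ?thesis using low unfolding low_point_before_rise_def by (simp add: less_imp_le)
next
  case False
  define k where "k = y - a"
  have y: "y = a + k" "k \<le> n" using False y unfolding k_def by auto
  consider "k = 0" | "k = n" | "1 \<le> k" "k < n" using y(2) by linarith
  then show ?thesis
    by cases (use y exit h in \<open>auto simp: first_exit_above_def Vpot_shift_incr\<close>)
qed

lemma low_point_exit_no_rise:
  assumes h: "h > 0" and low: "low_point_before_rise h a l"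
    and exit: "first_exit_above h n (shift_incr a l)" and x: "x < a + n"
  shows "\<not> rises_by h l x"
proof
  assume "rises_by h l x"
  then obtain i j where ij: "j \<le> x" "i \<le> j" "h \<le> Vpot l (int j) - Vpot l (int i)"
    unfolding rises_by_def by auto
  show False
  proof (cases "j \<le> a")
    case True
    then show False using low ij unfolding low_point_before_rise_def rises_by_def by auto
  next
    case False
    define k where "k = j - a"
    have "j = a + k" "k \<in> {1..<n}" using False ij x unfolding k_def by auto
    then have "Vpot l (int j) - Vpot l (int a) < h"
      using exit unfolding first_exit_above_def Vpot_shift_incr by auto
    moreover have "Vpot l (int a) \<le> Vpot l (int i)"
      using low_point_exit_min[OF h low exit] ij x by simp
    ultimately show False using ij by linarith
  qed
qed

lemma Tup_m1_of_decomposition: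
  assumes h: "h > 0" and low: "low_point_before_rise h a l"
    and exit: "first_exit_above h n (shift_incr a l)"
  shows "Tup l h = enat (a + n) \<and> m1 l h = a"
proof -
  have "h \<le> Vpot l (int (a + n)) - Vpot l (int a)"
    using exit unfolding first_exit_above_def Vpot_shift_incr by simp
  then have "rises_by h l (a + n)"
    unfolding rises_by_def using le_add1 order_refl by blast
  then have T: "Tup l h = enat (a + n)"
    unfolding Tup_eq_enat_iff using low_point_exit_no_rise[OF h low exit] by simp
  moreover have "m1 l h = a"
    unfolding m1_eq_iff[OF T] using low_point_exit_min[OF h low exit] low
    by (simp add: low_point_before_rise_def)
  ultimately show ?thesis by simp
qed

lemma pre_min_path_eq: "pre_min_path l h = reversed_path (m1 l h) l"
  by (simp add: pre_min_path_def reversed_path_def stopidx_def of_nat_diff Let_def)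

lemma post_min_path_eq:
  "Tup l h = enat (a + n) \<Longrightarrow> m1 l h = a \<Longrightarrow> post_min_path l h = stopped_path n (shift_incr a l)"
  by (simp add: post_min_path_def stopped_path_def stopidx_def Vpot_shift_incr)

lemma min_split_iff:
  assumes h: "h > 0"
  shows "(Tup l h \<noteq> \<infinity> \<and> m1 l h = a \<and> pre_min_path l h \<in> B \<and> post_min_path l h \<in> A) \<longleftrightarrow>
    (low_point_before_rise h a l \<and> reversed_path a l \<in> B) \<and>
    (\<exists>n. first_exit_above h n (shift_incr a l) \<and> stopped_path n (shift_incr a l) \<in> A)"
proof
  assume lhs: "Tup l h \<noteq> \<infinity> \<and> m1 l h = a \<and> pre_min_path l h \<in> B \<and> post_min_path l h \<in> A"
  then obtain t where t: "Tup l h = enat t" by auto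
  with lhs have "a < t" and "low_point_before_rise h a l"
    and exit: "first_exit_above h (t - a) (shift_incr a l)"
    using Tup_finite_decomposition[OF h t] by auto
  moreover have "Tup l h = enat (a + (t - a))" using t \<open>a < t\<close> by simp
  ultimately show "(low_point_before_rise h a l \<and> reversed_path a l \<in> B) \<and>
      (\<exists>n. first_exit_above h n (shift_incr a l) \<and> stopped_path n (shift_incr a l) \<in> A)"
    using lhs exit pre_min_path_eq[of l h] post_min_path_eq[of l h a "t - a"] by auto
next
  assume rhs: "(low_point_before_rise h a l \<and> reversed_path a l \<in> B) \<and>
      (\<exists>n. first_exit_above h n (shift_incr a l) \<and> stopped_path n (shift_incr a l) \<in> A)"
  then obtain n where "first_exit_above h n (shift_incr a l)" "stopped_path n (shift_incr a l) \<in> A"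
    by blast
  with rhs Tup_m1_of_decomposition[OF h] show
    "Tup l h \<noteq> \<infinity> \<and> m1 l h = a \<and> pre_min_path l h \<in> B \<and> post_min_path l h \<in> A"
    using pre_min_path_eq[of l h] post_min_path_eq[of l h a n] by auto
qed

lemma rises_by_of_block:
  assumes block: "\<forall>i\<in>{1..int K}. e < shift_incr s l i" and "h \<le> real K * e"
  shows "rises_by h l (s + K)"
proof -
  have "real K * e = (\<Sum>i\<in>{1..int K}. e)" by simp
  also have "\<dots> \<le> (\<Sum>i\<in>{1..int K}. shift_incr s l i)"
    using block by (intro sum_mono) (simp add: less_imp_le)
  also have "\<dots> = Vpot (shift_incr s l) (int K)" by (simp add: Vpot_def)
  finally have "h \<le> Vpot l (int (s + K)) - Vpot l (int s)"
    using assms(2) by (simp add: Vpot_shift_incr)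
  then show ?thesis unfolding rises_by_def by (meson le_add1 order_refl)
qed

lemma Vpot_cong_upto: "(\<And>i. i \<le> int a \<Longrightarrow> l i = l' i) \<Longrightarrow> j \<le> a \<Longrightarrow> Vpot l (int j) = Vpot l' (int j)"
  by (intro Vpot_cong) auto

lemma low_point_before_rise_cong:
  "(\<And>i. i \<le> int a \<Longrightarrow> l i = l' i) \<Longrightarrow> low_point_before_rise h a l = low_point_before_rise h a l'"
  unfolding low_point_before_rise_def rises_by_def by (auto simp: Vpot_cong_upto[of a l l'])

lemma reversed_path_cong: "(\<And>i. i \<le> int a \<Longrightarrow> l i = l' i) \<Longrightarrow> reversed_path a l = reversed_path a l'"
  unfolding reversed_path_def by (simp only: Vpot_cong_upto[of a l l'] diff_le_self order_refl)

lemma Vpot_shift_incr_cong: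
  "(\<And>i. int a < i \<Longrightarrow> l i = l' i) \<Longrightarrow> Vpot (shift_incr a l) (int k) = Vpot (shift_incr a l') (int k)"
  by (intro Vpot_cong) (simp add: shift_incr_def)

section \<open>First exit from the strip\<close>

lemma TV_eq_enat_iff:
  "TV l A = enat n \<longleftrightarrow> 1 \<le> n \<and> Vpot l (int n) \<in> A \<and> (\<forall>k\<in>{1..<n}. Vpot l (int k) \<notin> A)"
proof (cases "\<exists>x::nat. x \<ge> 1 \<and> Vpot l (int x) \<in> A")
  case True
  then show ?thesis unfolding TV_def by (simp add: Least_eq_iff_nat) auto
qed (auto simp: TV_def)

lemma enat_less_TV_iff: "enat n < TV l A \<longleftrightarrow> (\<forall>k\<in>{1..n}. Vpot l (int k) \<notin> A)"
proof (cases "\<exists>x::nat. x \<ge> 1 \<and> Vpot l (int x) \<in> A")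
  case True
  then show ?thesis unfolding TV_def by (simp add: less_Least_iff_nat) auto
qed (auto simp: TV_def)

lemma first_exit_above_iff_TV:
  assumes "h > 0"
  shows "first_exit_above h n l \<longleftrightarrow> TV l {h..} = enat n \<and> enat n < TV l {..<0}"
proof (cases "1 \<le> n")
  case True
  then have "{1..n} = insert n {1..<n}" by auto
  then show ?thesis
    using assms unfolding first_exit_above_def TV_eq_enat_iff enat_less_TV_iff by (auto simp: not_less)
qed (simp add: first_exit_above_def TV_eq_enat_iff)

lemma exit_before_below_iff:
  assumes "h > 0"
  shows "(hit_path l h \<in> A \<and> TV l {h..} < TV l {..<0}) \<longleftrightarrow>
    (\<exists>n. first_exit_above h n l \<and> stopped_path n l \<in> A)"
proof -
  have "hit_path l h = stopped_path n l" if "TV l {h..} = enat n" for n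
    using that by (simp add: hit_path_def stopped_path_def stopidx_def)
  moreover have "TV l {h..} < TV l {..<0} \<longleftrightarrow> (\<exists>n. TV l {h..} = enat n \<and> enat n < TV l {..<0})"
    by (cases "TV l {h..}") auto
  ultimately show ?thesis using first_exit_above_iff_TV[OF assms] by auto
qed

section \<open>Measurability\<close>

abbreviation walk_space :: "(int \<Rightarrow> real) measure" where
  "walk_space \<equiv> \<Pi>\<^sub>M i\<in>UNIV. borel"

lemma space_path_space [simp]: "space path_space = UNIV"
  by (simp add: path_space_def space_pair_measure space_PiM)

lemma measurable_Vpot [measurable]: "(\<lambda>l. Vpot l x) \<in> borel_measurable walk_space"
  unfolding Vpot_def by measurable

lemma measurable_shift_incr [measurable]: "shift_incr a \<in> measurable walk_space walk_space"
  unfolding shift_incr_def by (rule measurable_PiM_single') auto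

lemma pred_rises_by [measurable]: "Measurable.pred walk_space (\<lambda>l. rises_by h l x)"
  unfolding rises_by_def by measurable

lemma pred_low_point_before_rise [measurable]: "Measurable.pred walk_space (low_point_before_rise h a)"
  unfolding low_point_before_rise_def by measurable

lemma pred_first_exit_above [measurable]: "Measurable.pred walk_space (first_exit_above h n)"
  unfolding first_exit_above_def by measurable

lemma measurable_path_spaceI:
  "(\<lambda>l. fst (f l)) \<in> measurable walk_space (count_space UNIV) \<Longrightarrow>
   (\<And>k. (\<lambda>l. snd (f l) k) \<in> borel_measurable walk_space) \<Longrightarrow> f \<in> measurable walk_space path_space"
  unfolding path_space_def
  by (rule measurable_pair) (auto intro!: measurable_PiM_single' simp: comp_def)

lemma measurable_reversed_path [measurable]: "reversed_path a \<in> measurable walk_space path_space"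
  unfolding reversed_path_def by (rule measurable_path_spaceI) simp_all

lemma measurable_stopped_path [measurable]: "stopped_path n \<in> measurable walk_space path_space"
  unfolding stopped_path_def by (rule measurable_path_spaceI) simp_all

lemma measurable_Tup [measurable]: "(\<lambda>l. Tup l h) \<in> measurable walk_space (count_space UNIV)"
  unfolding Tup_eq_Least by measurable

lemma measurable_m1 [measurable]: "(\<lambda>l. m1 l h) \<in> measurable walk_space (count_space UNIV)"
proof -
  have [measurable]: "Measurable.pred walk_space (\<lambda>l. Vpot l (int x) = (MIN y\<in>{0..t}. Vpot l (int y)))"
    for x t
    unfolding pred_def by measurable
  have "(\<lambda>l. case t of enat t \<Rightarrow> (LEAST x. Vpot l (int x) = Min ((\<lambda>y. Vpot l (int y)) ` {0..t}))
      | \<infinity> \<Rightarrow> 0) \<in> measurable walk_space (count_space UNIV)" for t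
    by (cases t) (simp_all, measurable)
  then show ?thesis
    unfolding m1_def by (rule measurable_compose_countable) (rule measurable_Tup)
qed

lemma measurable_pre_min_path [measurable]: "(\<lambda>l. pre_min_path l h) \<in> measurable walk_space path_space"
  unfolding pre_min_path_eq by (rule measurable_compose_countable) simp_all

lemma measurable_post_min_path [measurable]: "(\<lambda>l. post_min_path l h) \<in> measurable walk_space path_space"
proof -
  define F where "F t m l = (t - enat m,
      \<lambda>k. Vpot l (int m + int (stopidx (t - enat m) k)) - Vpot l (int m))" for t m l
  have "F t m \<in> measurable walk_space path_space" for t m
    unfolding F_def by (rule measurable_path_spaceI) simp_all
  then have "(\<lambda>l. F t (m1 l h) l) \<in> measurable walk_space path_space" for t
    by (rule measurable_compose_countable) (rule measurable_m1)
  then have "(\<lambda>l. F (Tup l h) (m1 l h) l) \<in> measurable walk_space path_space"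
    by (rule measurable_compose_countable) (rule measurable_Tup)
  then show ?thesis unfolding post_min_path_def F_def Let_def .
qed

section \<open>Independence from a series of products\<close>

lemma (in prob_space) indep_var_prob_product:
  assumes X: "random_variable S X" and Y: "random_variable T Y"
    and prod: "\<And>A B. A \<in> sets S \<Longrightarrow> B \<in> sets T \<Longrightarrow>
      prob {\<omega>\<in>space M. X \<omega> \<in> A \<and> Y \<omega> \<in> B} =
      prob {\<omega>\<in>space M. X \<omega> \<in> A} * prob {\<omega>\<in>space M. Y \<omega> \<in> B}"
  shows "indep_var S X T Y"
proof -
  let ?F = "{X -` A \<inter> space M | A. A \<in> sets S}" and ?G = "{Y -` B \<inter> space M | B. B \<in> sets T}"
  have "Int_stable ?F" "Int_stable ?G"
    by (auto intro!: Int_stableI) (metis (no_types) sets.Int vimage_Int Int_assoc Int_left_commute Int_absorb)+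
  moreover have "indep_set ?F ?G"
    unfolding indep_sets2_eq using X Y
  proof (auto intro: measurable_sets)
    fix A B assume "A \<in> sets S" "B \<in> sets T"
    moreover have "X -` A \<inter> space M \<inter> (Y -` B \<inter> space M) = {\<omega>\<in>space M. X \<omega> \<in> A \<and> Y \<omega> \<in> B}"
      "X -` A \<inter> space M = {\<omega>\<in>space M. X \<omega> \<in> A}" "Y -` B \<inter> space M = {\<omega>\<in>space M. Y \<omega> \<in> B}"
      by auto
    ultimately show "prob (X -` A \<inter> space M \<inter> (Y -` B \<inter> space M)) =
        prob (X -` A \<inter> space M) * prob (Y -` B \<inter> space M)"
      using prod by simp
  qed
  ultimately show ?thesis
    unfolding indep_var_eq using X Y by (simp add: indep_set_sigma_sets)
qed

lemma (in prob_space) prob_factor_if_sums_product: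
  fixes f :: "nat \<Rightarrow> 'b set \<Rightarrow> real" and g :: "'c set \<Rightarrow> real"
  assumes X: "random_variable S X" and Y: "random_variable T Y"
    and sums: "\<And>A B. A \<in> sets S \<Longrightarrow> B \<in> sets T \<Longrightarrow>
      (\<lambda>a. f a A * g B) sums prob {\<omega>\<in>space M. X \<omega> \<in> A \<and> Y \<omega> \<in> B}"
    and A: "A \<in> sets S" and B: "B \<in> sets T"
  shows "prob {\<omega>\<in>space M. X \<omega> \<in> A \<and> Y \<omega> \<in> B} = prob {\<omega>\<in>space M. X \<omega> \<in> A} * (g B / g (space T))"
proof -
  have marginal: "{\<omega>\<in>space M. X \<omega> \<in> A' \<and> Y \<omega> \<in> space T} = {\<omega>\<in>space M. X \<omega> \<in> A'}" for A'
    using measurable_space[OF Y] by auto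
  have "{\<omega>\<in>space M. X \<omega> \<in> space S} = space M"
    using measurable_space[OF X] by auto
  then have total: "(\<lambda>a. f a (space S) * g (space T)) sums 1"
    using sums[OF sets.top sets.top] by (simp add: marginal prob_space)
  have "g (space T) \<noteq> 0"
  proof
    assume "g (space T) = 0"
    with total have "(\<lambda>a. 0) sums (1::real)" by simp
    then show False using sums_zero sums_unique2 by fastforce
  qed
  then have "(\<lambda>a. f a A) sums (prob {\<omega>\<in>space M. X \<omega> \<in> A} / g (space T))"
    using sums_divide[OF sums[OF A sets.top], of "g (space T)"] by (simp add: marginal)
  then have "(\<lambda>a. f a A * g B) sums (prob {\<omega>\<in>space M. X \<omega> \<in> A} / g (space T) * g B)"
    by (rule sums_mult2)
  then show ?thesis using sums_unique2[OF sums[OF A B]] by simp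
qed

lemma (in prob_space) prob_marginal_if_sums_product:
  fixes f :: "nat \<Rightarrow> 'b set \<Rightarrow> real" and g :: "'c set \<Rightarrow> real"
  assumes X: "random_variable S X" and Y: "random_variable T Y"
    and sums: "\<And>A B. A \<in> sets S \<Longrightarrow> B \<in> sets T \<Longrightarrow>
      (\<lambda>a. f a A * g B) sums prob {\<omega>\<in>space M. X \<omega> \<in> A \<and> Y \<omega> \<in> B}"
    and B: "B \<in> sets T"
  shows "prob {\<omega>\<in>space M. Y \<omega> \<in> B} = g B / g (space T)"
proof -
  have "prob {\<omega>\<in>space M. X \<omega> \<in> space S \<and> Y \<omega> \<in> B} =
      prob {\<omega>\<in>space M. X \<omega> \<in> space S} * (g B / g (space T))"
    using X Y sums sets.top B by (rule prob_factor_if_sums_product)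
  moreover have "{\<omega>\<in>space M. X \<omega> \<in> space S \<and> Y \<omega> \<in> B} = {\<omega>\<in>space M. Y \<omega> \<in> B}"
    and "{\<omega>\<in>space M. X \<omega> \<in> space S} = space M"
    using measurable_space[OF X] by auto
  ultimately show ?thesis by (simp only: prob_space mult_1)
qed

lemma (in prob_space) indep_var_if_sums_product:
  fixes f :: "nat \<Rightarrow> 'b set \<Rightarrow> real"
  assumes X: "random_variable S X" and Y: "random_variable T Y"
    and sums: "\<And>A B. A \<in> sets S \<Longrightarrow> B \<in> sets T \<Longrightarrow>
      (\<lambda>a. f a A * g B) sums prob {\<omega>\<in>space M. X \<omega> \<in> A \<and> Y \<omega> \<in> B}"
  shows "indep_var S X T Y"
  using X Y
  by (rule indep_var_prob_product)
     (simp add: prob_factor_if_sums_product[OF X Y sums] prob_marginal_if_sums_product[OF X Y sums])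

lemma (in prob_space) obtain_positive_threshold:
  fixes X :: "'a \<Rightarrow> real"
  assumes [measurable]: "X \<in> borel_measurable M" and pos: "0 < prob {\<omega>\<in>space M. 0 < X \<omega>}"
  obtains e where "0 < e" "0 < prob {\<omega>\<in>space M. e < X \<omega>}"
proof -
  define A where "A n = {\<omega>\<in>space M. inverse (real (Suc n)) < X \<omega>}" for n
  have "incseq A"
    unfolding A_def incseq_def
    by (auto elim!: order.strict_trans1[rotated] intro!: le_imp_inverse_le)
  moreover have "(\<Union>n. A n) = {\<omega>\<in>space M. 0 < X \<omega>}"
  proof (intro antisym subsetI)
    fix \<omega> assume "\<omega> \<in> {\<omega>\<in>space M. 0 < X \<omega>}"
    then obtain n where "0 < n" "inverse (real n) < X \<omega>" "\<omega> \<in> space M"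
      using ex_inverse_of_nat_less by auto
    then show "\<omega> \<in> (\<Union>n. A n)"
      unfolding A_def by (intro UN_I[of "n - 1"]) simp_all
  next
    fix \<omega> assume "\<omega> \<in> (\<Union>n. A n)"
    then show "\<omega> \<in> {\<omega>\<in>space M. 0 < X \<omega>}"
      unfolding A_def by (auto intro: order.strict_trans[rotated])
  qed
  moreover have "A n \<in> sets M" for n
    unfolding A_def by measurable
  ultimately have "(\<lambda>n. prob (A n)) \<longlonglongrightarrow> prob {\<omega>\<in>space M. 0 < X \<omega>}"
    using finite_Lim_measure_incseq[of A] by auto
  then have "\<forall>\<^sub>F n in sequentially. 0 < prob (A n)"
    using pos by (rule order_tendstoD(1))
  then obtain n where "0 < prob (A n)"
    by (auto simp: eventually_sequentially)
  then show ?thesis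
    using that[of "inverse (real (Suc n))"] by (simp add: A_def)
qed

section \<open>Walks with i.i.d. increments\<close>

locale iid_increments = prob_space M for M :: "'a measure" +
  fixes L :: "int \<Rightarrow> 'a \<Rightarrow> real"
  assumes measurable_L [measurable]: "\<And>i. L i \<in> borel_measurable M"
    and indep_L: "indep_vars (\<lambda>_. borel) L UNIV"
    and distr_L: "\<And>i. distr M borel (L i) = distr M borel (L 0)"
begin

abbreviation increments :: "'a \<Rightarrow> int \<Rightarrow> real" where
  "increments \<omega> \<equiv> \<lambda>i. L i \<omega>"

lemma measurable_increments [measurable]: "increments \<in> measurable M walk_space"
  by (rule measurable_PiM_single') auto

lemma distr_increments: "distr M walk_space increments = (\<Pi>\<^sub>M i\<in>UNIV. distr M borel (L 0))"
proof -
  have "distr M walk_space (\<lambda>\<omega>. \<lambda>i\<in>UNIV. L i \<omega>) = (\<Pi>\<^sub>M i\<in>UNIV. distr M borel (L i))"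
    by (rule iffD1[OF indep_vars_iff_distr_eq_PiM indep_L]) auto
  also have "\<dots> = (\<Pi>\<^sub>M i\<in>UNIV. distr M borel (L 0))"
    by (intro PiM_cong refl) (rule distr_L)
  finally show ?thesis by (simp add: restrict_UNIV)
qed

lemma distr_shift_incr: "distr M walk_space (\<lambda>\<omega>. shift_incr a (increments \<omega>)) = distr M walk_space increments"
proof -
  have "distr M walk_space (\<lambda>\<omega>. shift_incr a (increments \<omega>)) =
      distr (distr M walk_space increments) walk_space (shift_incr a)"
    by (subst distr_distr[OF measurable_shift_incr measurable_increments]) (simp add: comp_def)
  also have "\<dots> = distr (\<Pi>\<^sub>M i\<in>UNIV. distr M borel (L 0))
      (\<Pi>\<^sub>M i\<in>UNIV. (\<lambda>_. distr M borel (L 0)) (i + int a)) (\<lambda>l. \<lambda>i\<in>UNIV. l (i + int a))"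
    unfolding distr_increments shift_incr_def by (intro distr_cong) (auto intro!: sets_PiM_cong)
  also have "\<dots> = distr M walk_space increments"
    unfolding distr_increments by (rule distr_PiM_reindex) (auto intro: prob_space_distr)
  finally show ?thesis .
qed

lemma prob_shift_incr:
  assumes [measurable]: "Measurable.pred walk_space P"
  shows "prob {\<omega>\<in>space M. P (shift_incr a (increments \<omega>))} = prob {\<omega>\<in>space M. P (increments \<omega>)}"
proof -
  have law: "prob {\<omega>\<in>space M. P (f \<omega>)} = measure (distr M walk_space f) {l\<in>space walk_space. P l}"
    if f: "f \<in> measurable M walk_space" for f
  proof -
    have "{\<omega>\<in>space M. P (f \<omega>)} = f -` {l\<in>space walk_space. P l} \<inter> space M"
      using measurable_space[OF f] by auto
    then show ?thesis by (simp add: measure_distr[OF f])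
  qed
  show ?thesis
    by (simp only: law[OF measurable_increments] law[OF measurable_compose[OF measurable_increments
          measurable_shift_incr]] distr_shift_incr)
qed

lemma indep_past_future:
  assumes f: "f \<in> measurable walk_space N1" and g: "g \<in> measurable walk_space N2"
    and past: "\<And>l l'. (\<And>i. i \<le> c \<Longrightarrow> l i = l' i) \<Longrightarrow> f l = f l'"
    and future: "\<And>l l'. (\<And>i. c < i \<Longrightarrow> l i = l' i) \<Longrightarrow> g l = g l'"
  shows "indep_var N1 (\<lambda>\<omega>. f (increments \<omega>)) N2 (\<lambda>\<omega>. g (increments \<omega>))"
proof -
  define extend where "extend K x = (\<lambda>i. if i \<in> K then x i else 0)" for K :: "int set" and x :: "int \<Rightarrow> real"
  have extend: "extend K \<in> measurable (\<Pi>\<^sub>M i\<in>K. borel) walk_space" for K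
    unfolding extend_def
  proof (rule measurable_PiM_single')
    show "(\<lambda>x. if i \<in> K then x i else 0) \<in> borel_measurable (\<Pi>\<^sub>M i\<in>K. borel)" for i
      by (cases "i \<in> K") simp_all
  qed auto
  have "indep_var (\<Pi>\<^sub>M i\<in>{..c}. borel) (\<lambda>\<omega>. restrict (increments \<omega>) {..c})
      (\<Pi>\<^sub>M i\<in>{c<..}. borel) (\<lambda>\<omega>. restrict (increments \<omega>) {c<..})"
    by (rule indep_var_restrict[OF indep_L]) auto
  then have "indep_var N1 ((f \<circ> extend {..c}) \<circ> (\<lambda>\<omega>. restrict (increments \<omega>) {..c}))
      N2 ((g \<circ> extend {c<..}) \<circ> (\<lambda>\<omega>. restrict (increments \<omega>) {c<..}))"
    by (rule indep_var_compose) (intro measurable_comp[OF extend] f g)+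
  moreover have "(f \<circ> extend {..c}) \<circ> (\<lambda>\<omega>. restrict (increments \<omega>) {..c}) = (\<lambda>\<omega>. f (increments \<omega>))"
    unfolding comp_def by (intro ext past) (simp add: extend_def)
  moreover have "(g \<circ> extend {c<..}) \<circ> (\<lambda>\<omega>. restrict (increments \<omega>) {c<..}) = (\<lambda>\<omega>. g (increments \<omega>))"
    unfolding comp_def by (intro ext future) (simp add: extend_def)
  ultimately show ?thesis by simp
qed

lemma prob_past_future:
  assumes "Measurable.pred walk_space P" "Measurable.pred walk_space Q"
    and "\<And>l l'. (\<And>i. i \<le> c \<Longrightarrow> l i = l' i) \<Longrightarrow> P l = P l'"
    and "\<And>l l'. (\<And>i. c < i \<Longrightarrow> l i = l' i) \<Longrightarrow> Q l = Q l'"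
  shows "prob {\<omega>\<in>space M. P (increments \<omega>) \<and> Q (increments \<omega>)} =
    prob {\<omega>\<in>space M. P (increments \<omega>)} * prob {\<omega>\<in>space M. Q (increments \<omega>)}"
proof -
  have "indep_var (count_space UNIV) (\<lambda>\<omega>. P (increments \<omega>)) (count_space UNIV) (\<lambda>\<omega>. Q (increments \<omega>))"
    using assms by (rule indep_past_future)
  from prob_indep_random_variable[OF this, where A="{True}" and B="{True}"] show ?thesis by simp
qed

lemma prob_L_gt: "prob {\<omega>\<in>space M. e < L i \<omega>} = prob {\<omega>\<in>space M. e < L 0 \<omega>}"
proof -
  have "prob {\<omega>\<in>space M. e < L j \<omega>} = measure (distr M borel (L j)) {e<..}" for j
    by (subst measure_distr) (auto intro!: arg_cong[where f=prob])
  then show ?thesis by (simp only: distr_L[of i])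
qed

lemma prob_increments_gt:
  "prob {\<omega>\<in>space M. \<forall>i\<in>{1..int K}. e < L i \<omega>} = prob {\<omega>\<in>space M. e < L 0 \<omega>} ^ K"
proof (induction K)
  case 0
  then show ?case by (simp add: prob_space)
next
  case (Suc K)
  have "{1..int (Suc K)} = insert (int K + 1) {1..int K}" by auto
  then have "prob {\<omega>\<in>space M. \<forall>i\<in>{1..int (Suc K)}. e < L i \<omega>} =
      prob {\<omega>\<in>space M. (\<forall>i\<in>{1..int K}. e < L i \<omega>) \<and> e < L (int K + 1) \<omega>}"
    by (simp add: conj_commute)
  also have "\<dots> = prob {\<omega>\<in>space M. \<forall>i\<in>{1..int K}. e < L i \<omega>} * prob {\<omega>\<in>space M. e < L (int K + 1) \<omega>}"
    by (rule prob_past_future[where c="int K" and P="\<lambda>l. \<forall>i\<in>{1..int K}. e < l i"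
          and Q="\<lambda>l. e < l (int K + 1)"]) auto
  finally show ?case using Suc.IH prob_L_gt[of e "int K + 1"] by simp
qed

lemma prob_no_block:
  assumes [measurable]: "Measurable.pred walk_space P"
    and local: "\<And>l l'. (\<And>i. i \<in> {1..int K} \<Longrightarrow> l i = l' i) \<Longrightarrow> P l = P l'"
  shows "prob {\<omega>\<in>space M. \<forall>j<J. \<not> P (shift_incr (j * K) (increments \<omega>))} =
    (1 - prob {\<omega>\<in>space M. P (increments \<omega>)}) ^ J"
proof (induction J)
  case 0
  then show ?case by (simp add: prob_space)
next
  case (Suc J)
  have past: "(\<forall>j<J. \<not> P (shift_incr (j * K) l)) = (\<forall>j<J. \<not> P (shift_incr (j * K) l'))"
    if agree: "\<And>i. i \<le> int (J * K) \<Longrightarrow> l i = l' i" for l l'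
  proof -
    have "P (shift_incr (j * K) l) = P (shift_incr (j * K) l')" if "j < J" for j
    proof (rule local)
      have "j * K + K \<le> J * K"
        using mult_le_mono1[OF Suc_leI[OF that], of K] by simp
      then have "int (j * K) + int K \<le> int (J * K)"
        by (metis of_nat_add of_nat_le_iff)
      then show "shift_incr (j * K) l i = shift_incr (j * K) l' i" if "i \<in> {1..int K}" for i
        unfolding shift_incr_def using that by (intro agree) auto
    qed
    then show ?thesis by auto
  qed
  have future: "(\<not> P (shift_incr (J * K) l)) = (\<not> P (shift_incr (J * K) l'))"
    if agree: "\<And>i. int (J * K) < i \<Longrightarrow> l i = l' i" for l l'
  proof -
    have "P (shift_incr (J * K) l) = P (shift_incr (J * K) l')"
      by (rule local) (simp add: shift_incr_def agree)
    then show ?thesis by simp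
  qed
  have meas_past: "Measurable.pred walk_space (\<lambda>l. \<forall>j<J. \<not> P (shift_incr (j * K) l))"
    by measurable
  have meas_future: "Measurable.pred walk_space (\<lambda>l. \<not> P (shift_incr (J * K) l))"
    by measurable
  have "prob {\<omega>\<in>space M. \<forall>j<Suc J. \<not> P (shift_incr (j * K) (increments \<omega>))} =
      prob {\<omega>\<in>space M. (\<forall>j<J. \<not> P (shift_incr (j * K) (increments \<omega>))) \<and>
        \<not> P (shift_incr (J * K) (increments \<omega>))}"
    by (rule arg_cong[where f=prob]) (auto simp: less_Suc_eq)
  also have "\<dots> = prob {\<omega>\<in>space M. \<forall>j<J. \<not> P (shift_incr (j * K) (increments \<omega>))} *
      prob {\<omega>\<in>space M. \<not> P (shift_incr (J * K) (increments \<omega>))}"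
    by (rule prob_past_future[OF meas_past meas_future past future])
  also have "prob {\<omega>\<in>space M. \<not> P (shift_incr (J * K) (increments \<omega>))} =
      prob {\<omega>\<in>space M. \<not> P (increments \<omega>)}"
    by (rule prob_shift_incr) measurable
  also have "{\<omega>\<in>space M. \<not> P (increments \<omega>)} = space M - {\<omega>\<in>space M. P (increments \<omega>)}"
    by auto
  also have "prob \<dots> = 1 - prob {\<omega>\<in>space M. P (increments \<omega>)}"
    by (rule prob_compl) measurable
  finally show ?case using Suc.IH by simp
qed

lemma AE_block_occurs:
  assumes [measurable]: "Measurable.pred walk_space P"
    and local: "\<And>l l'. (\<And>i. i \<in> {1..int K} \<Longrightarrow> l i = l' i) \<Longrightarrow> P l = P l'"
    and pos: "0 < prob {\<omega>\<in>space M. P (increments \<omega>)}"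
  shows "AE \<omega> in M. \<exists>j. P (shift_incr (j * K) (increments \<omega>))"
proof -
  define q where "q = prob {\<omega>\<in>space M. P (increments \<omega>)}"
  define Z where "Z = {\<omega>\<in>space M. \<forall>j. \<not> P (shift_incr (j * K) (increments \<omega>))}"
  have Z [measurable]: "Z \<in> sets M" unfolding Z_def by measurable
  have "prob Z \<le> (1 - q) ^ J" for J
  proof -
    have "prob Z \<le> prob {\<omega>\<in>space M. \<forall>j<J. \<not> P (shift_incr (j * K) (increments \<omega>))}"
      by (rule finite_measure_mono) (auto simp: Z_def)
    also have "\<dots> = (1 - q) ^ J"
      unfolding q_def by (rule prob_no_block[OF assms(1) local])
    finally show ?thesis .
  qed
  moreover have "(\<lambda>J. (1 - q) ^ J) \<longlonglongrightarrow> 0"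
    using pos prob_le_1 unfolding q_def by (intro LIMSEQ_power_zero) auto
  ultimately have "prob Z \<le> 0" by (intro LIMSEQ_le_const) auto
  then have "prob Z = 0" using measure_nonneg[of M Z] by simp
  then show ?thesis unfolding Z_def by (subst (asm) prob_Collect_eq_0) auto
qed

lemma AE_Tup_finite:
  assumes "0 < prob {\<omega>\<in>space M. 0 < L 0 \<omega>}"
  shows "AE \<omega> in M. Tup (increments \<omega>) h \<noteq> \<infinity>"
proof -
  obtain e where e: "0 < e" "0 < prob {\<omega>\<in>space M. e < L 0 \<omega>}"
    using obtain_positive_threshold[OF measurable_L assms] .
  define K where "K = nat \<lceil>h / e\<rceil>"
  have "h / e \<le> real K" unfolding K_def by (rule real_nat_ceiling_ge)
  then have hK: "h \<le> real K * e" using e(1) by (simp add: pos_divide_le_eq)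
  have "0 < prob {\<omega>\<in>space M. \<forall>i\<in>{1..int K}. e < L i \<omega>}"
    unfolding prob_increments_gt using e(2) by simp
  then have "AE \<omega> in M. \<exists>j. \<forall>i\<in>{1..int K}. e < shift_incr (j * K) (increments \<omega>) i"
    by (intro AE_block_occurs[where P="\<lambda>l. \<forall>i\<in>{1..int K}. e < l i"]) auto
  then show ?thesis
  proof (rule AE_mp, intro AE_I2 impI)
    fix \<omega> assume "\<exists>j. \<forall>i\<in>{1..int K}. e < shift_incr (j * K) (increments \<omega>) i"
    then obtain j where "rises_by h (increments \<omega>) (j * K + K)"
      using rises_by_of_block hK by blast
    then show "Tup (increments \<omega>) h \<noteq> \<infinity>" unfolding Tup_eq_Least by auto
  qed
qed

lemma prob_min_at:
  assumes h: "h > 0" and [measurable]: "B \<in> sets path_space" "A \<in> sets path_space"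
  shows "prob {\<omega>\<in>space M. Tup (increments \<omega>) h \<noteq> \<infinity> \<and> m1 (increments \<omega>) h = a \<and>
      pre_min_path (increments \<omega>) h \<in> B \<and> post_min_path (increments \<omega>) h \<in> A} =
    prob {\<omega>\<in>space M. low_point_before_rise h a (increments \<omega>) \<and> reversed_path a (increments \<omega>) \<in> B} *
    prob {\<omega>\<in>space M. \<exists>n. first_exit_above h n (increments \<omega>) \<and> stopped_path n (increments \<omega>) \<in> A}"
proof -
  let ?past = "\<lambda>l. low_point_before_rise h a l \<and> reversed_path a l \<in> B"
  let ?exit = "\<lambda>l. \<exists>n. first_exit_above h n l \<and> stopped_path n l \<in> A"
  have past: "?past l = ?past l'" if "\<And>i. i \<le> int a \<Longrightarrow> l i = l' i" for l l'
    using low_point_before_rise_cong[OF that] reversed_path_cong[OF that] by simp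
  have future: "?exit (shift_incr a l) = ?exit (shift_incr a l')" if "\<And>i. int a < i \<Longrightarrow> l i = l' i" for l l'
    by (simp only: first_exit_above_def stopped_path_def Vpot_shift_incr_cong[OF that])
  have "prob {\<omega>\<in>space M. Tup (increments \<omega>) h \<noteq> \<infinity> \<and> m1 (increments \<omega>) h = a \<and>
      pre_min_path (increments \<omega>) h \<in> B \<and> post_min_path (increments \<omega>) h \<in> A} =
      prob {\<omega>\<in>space M. ?past (increments \<omega>) \<and> ?exit (shift_incr a (increments \<omega>))}"
    by (simp only: min_split_iff[OF h])
  also have "\<dots> = prob {\<omega>\<in>space M. ?past (increments \<omega>)} *
      prob {\<omega>\<in>space M. ?exit (shift_incr a (increments \<omega>))}"
    by (rule prob_past_future[where c="int a"]) (measurable, measurable, fact past, fact future)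
  also have "prob {\<omega>\<in>space M. ?exit (shift_incr a (increments \<omega>))} = prob {\<omega>\<in>space M. ?exit (increments \<omega>)}"
    by (rule prob_shift_incr) measurable
  finally show ?thesis .
qed

lemma prob_pre_post_sums:
  assumes h: "h > 0" and finite: "AE \<omega> in M. Tup (increments \<omega>) h \<noteq> \<infinity>"
    and [measurable]: "B \<in> sets path_space" "A \<in> sets path_space"
  shows "(\<lambda>a. prob {\<omega>\<in>space M. low_point_before_rise h a (increments \<omega>) \<and> reversed_path a (increments \<omega>) \<in> B} *
      prob {\<omega>\<in>space M. \<exists>n. first_exit_above h n (increments \<omega>) \<and> stopped_path n (increments \<omega>) \<in> A})
    sums prob {\<omega>\<in>space M. pre_min_path (increments \<omega>) h \<in> B \<and> post_min_path (increments \<omega>) h \<in> A}"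
proof -
  define E where "E a = {\<omega>\<in>space M. Tup (increments \<omega>) h \<noteq> \<infinity> \<and> m1 (increments \<omega>) h = a \<and>
    pre_min_path (increments \<omega>) h \<in> B \<and> post_min_path (increments \<omega>) h \<in> A}" for a
  have "E a \<in> sets M" for a
    unfolding E_def by measurable
  moreover have "disjoint_family E"
    unfolding disjoint_family_on_def E_def by auto
  ultimately have "(\<lambda>a. prob (E a)) sums prob (\<Union>a. E a)"
    by (intro finite_measure_UNION) auto
  moreover have "prob (\<Union>a. E a) =
      prob {\<omega>\<in>space M. pre_min_path (increments \<omega>) h \<in> B \<and> post_min_path (increments \<omega>) h \<in> A}"
    using finite \<open>\<And>a. E a \<in> sets M\<close> by (intro measure_eq_AE) (auto simp: E_def)
  ultimately show ?thesis
    unfolding E_def prob_min_at[OF assms(1,3,4)] by simp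
qed

end

theorem proposition5p2:
  fixes M :: "'a measure" and L :: "int \<Rightarrow> 'a \<Rightarrow> real" and h :: real
  assumes "prob_space M"
    and "\<And>i. L i \<in> borel_measurable M"
    and "prob_space.indep_vars M (\<lambda>_. borel) L UNIV"
    and "\<And>i. distr M borel (L i) = distr M borel (L 0)"
    and "\<P>(\<omega> in M. L 0 \<omega> > 0) > 0"
    and "\<P>(\<omega> in M. L 0 \<omega> < 0) > 0"
    and "AE \<omega> in M. liminf (\<lambda>x::nat. ereal (Vpot (\<lambda>i. L i \<omega>) (int x))) = -\<infinity>"
    and "h > 0"
  shows "prob_space.indep_var M
           path_space (\<lambda>\<omega>. pre_min_path (\<lambda>i. L i \<omega>) h)
           path_space (\<lambda>\<omega>. post_min_path (\<lambda>i. L i \<omega>) h)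
       \<and> (\<forall>A \<in> sets path_space.
            \<P>(\<omega> in M. post_min_path (\<lambda>i. L i \<omega>) h \<in> A)
          = cond_prob M (\<lambda>\<omega>. hit_path (\<lambda>i. L i \<omega>) h \<in> A)
              (\<lambda>\<omega>. TV (\<lambda>i. L i \<omega>) {h..} < TV (\<lambda>i. L i \<omega>) {..<0}))"
proof -
  interpret iid_increments M L
    using assms(1-4) by (simp add: iid_increments_def iid_increments_axioms_def)
  define exit_prob where "exit_prob A =
    prob {\<omega>\<in>space M. \<exists>n. first_exit_above h n (increments \<omega>) \<and> stopped_path n (increments \<omega>) \<in> A}" for A
  have "AE \<omega> in M. Tup (increments \<omega>) h \<noteq> \<infinity>"
    using assms(5) by (intro AE_Tup_finite) simp
  note sums = prob_pre_post_sums[OF assms(8) this, folded exit_prob_def]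
  have pre: "random_variable path_space (\<lambda>\<omega>. pre_min_path (increments \<omega>) h)"
    and post: "random_variable path_space (\<lambda>\<omega>. post_min_path (increments \<omega>) h)"
    by (rule measurable_compose[OF measurable_increments], measurable)+
  have "indep_var path_space (\<lambda>\<omega>. pre_min_path (increments \<omega>) h)
      path_space (\<lambda>\<omega>. post_min_path (increments \<omega>) h)"
    using pre post sums by (rule indep_var_if_sums_product)
  moreover have "prob {\<omega>\<in>space M. post_min_path (increments \<omega>) h \<in> A} = exit_prob A / exit_prob UNIV"
    if "A \<in> sets path_space" for A
    using prob_marginal_if_sums_product[OF pre post sums that] unfolding space_path_space .
  moreover have "cond_prob M (\<lambda>\<omega>. hit_path (increments \<omega>) h \<in> A)
      (\<lambda>\<omega>. TV (increments \<omega>) {h..} < TV (increments \<omega>) {..<0}) = exit_prob A / exit_prob UNIV" for A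
    using exit_before_below_iff[OF assms(8), where A=A] exit_before_below_iff[OF assms(8), where A=UNIV]
    by (simp add: cond_prob_def exit_prob_def)
  ultimately show ?thesis by simp
qed

end
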